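(* Let $\mu,\nu$ be Borel probability measures on $[0,1)$, with $\nu$ dyadically doubling with constant $D$ ($\nu(\hat I)\le D\nu(I)$ for $I\in\mathcal{D}\setminus\{[0,1)\}$). There exist constants $\epsilon>0$ and $C\ge1$, depending only on $D$, such that for every $I\in\mathcal{D}$ with $\alpha_{\mu,\nu}(I)<\epsilon$, $$\mu(I)\le C\min\{\mu(I_-),\mu(I_+)\}.$$
   Context: $\mathcal{D}$: dyadic intervals $[j2^{-k},(j+1)2^{-k})\subset[0,1)$, $k\ge0$; $\hat I$ is the parent of $I$, and $I_-,I_+$ are the left and right halves of $I$. Wasserstein distance: $\mathbb{W}_1(\nu_1,\nu_2) := \sup_\psi |\int\psi\,d\nu_1 - \int\psi\,d\nu_2|$ over all $1$-Lipschitz $\psi\colon\mathbb{R}\to\mathbb{R}$ supported on $[0,1]$. $T_I$ is the increasing affine map from $\overline I$ onto $[0,1]$, $\mu_I := T_{I\sharp}(\mu|_I)/\mu(I)$, $\nu_I := T_{I\sharp}(\nu|_I)/\nu(I)$ (zero if the mass vanishes), and $\alpha_{\mu,\nu}(I) := \mathbb{W}_1(\mu_I,\nu_I)$. *)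

theory Defs
  imports "HOL-Probability.Probability"
begin

text \<open>Dyadic interval [j 2^-k, (j+1) 2^-k), indexed by (k, j) with j < 2^k.
  Its parent is (k-1, j div 2) for k \<ge> 1; its left/right halves are (k+1, 2j) and (k+1, 2j+1).\<close>
definition dyint :: "nat \<Rightarrow> nat \<Rightarrow> real set" where
  "dyint k j = {real j / 2 ^ k ..< (real j + 1) / 2 ^ k}"

definition Tdy :: "nat \<Rightarrow> nat \<Rightarrow> real \<Rightarrow> real" where
  "Tdy k j x = 2 ^ k * x - real j"

text \<open>Normalized push-forward T_I # (mu restricted to I) / mu(I) (zero measure if mu(I) = 0).\<close>
definition blowup :: "real measure \<Rightarrow> nat \<Rightarrow> nat \<Rightarrow> real measure" where
  "blowup \<mu> k j = scale_measure (ennreal (1 / measure \<mu> (dyint k j)))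
      (distr (density \<mu> (indicator (dyint k j))) borel (Tdy k j))"

definition W1 :: "real measure \<Rightarrow> real measure \<Rightarrow> real" where
  "W1 \<nu>1 \<nu>2 = (SUP \<psi> \<in> {\<psi> :: real \<Rightarrow> real. 1-lipschitz_on UNIV \<psi> \<and> (\<forall>x. x \<notin> {0..1} \<longrightarrow> \<psi> x = 0)}.
      \<bar>(\<integral>x. \<psi> x \<partial>\<nu>1) - (\<integral>x. \<psi> x \<partial>\<nu>2)\<bar>)"

definition alpha :: "real measure \<Rightarrow> real measure \<Rightarrow> nat \<Rightarrow> nat \<Rightarrow> real" where
  "alpha \<mu> \<nu> k j = W1 (blowup \<mu> k j) (blowup \<nu> k j)"

definition prob_on_unit :: "real measure \<Rightarrow> bool" where
  "prob_on_unit \<mu> \<longleftrightarrow> sets \<mu> = sets borel \<and> prob_space \<mu> \<and> measure \<mu> {0..<1} = 1"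

definition dyadic_doubling :: "real measure \<Rightarrow> real \<Rightarrow> bool" where
  "dyadic_doubling \<nu> D \<longleftrightarrow>
     (\<forall>k j. j < 2 ^ (Suc k) \<longrightarrow> measure \<nu> (dyint k (j div 2)) \<le> D * measure \<nu> (dyint (Suc k) j))"

end

theory Submission
  imports Defs
begin

text \<open>Test the Wasserstein distance with a tent of height 1/4 over the left (right) half
  of the rescaled interval. Against \<open>\<mu>\<^sub>I\<close> it integrates to at most \<open>\<mu>(I\<^sub>-)/(4\<mu>(I))\<close>;
  against \<open>\<nu>\<^sub>I\<close> it integrates to at least \<open>\<nu>(J)/(8\<nu>(I))\<close>, where \<open>J\<close> is a dyadic
  grandchild of \<open>I\<^sub>-\<close> on which the tent is at least 1/8, and doubling (with \<open>D \<ge> 1\<close>)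
  bounds \<open>\<nu>(I) \<le> D\<^sup>3\<nu>(J)\<close>. If \<open>\<alpha>(I) < 1/(16D\<^sup>3)\<close>, the two integrals are too close
  for \<open>\<mu>(I\<^sub>-)\<close> to be below \<open>\<mu>(I)/(4D\<^sup>3)\<close>.\<close>

lemma sets_dyint [measurable]: "dyint k j \<in> sets borel"
  unfolding dyint_def by simp

lemma measurable_Tdy [measurable]: "Tdy k j \<in> borel_measurable borel"
  unfolding Tdy_def by measurable

lemma dyint_descendant_iff:
  "x \<in> dyint (k + n) (2 ^ n * j + i) \<longleftrightarrow>
     real i / 2 ^ n \<le> Tdy k j x \<and> Tdy k j x < (real i + 1) / 2 ^ n"
proof -
  have "(2::real) ^ (k + n) = 2 ^ k * 2 ^ n" by (simp add: power_add)
  then show ?thesis unfolding dyint_def Tdy_def by (simp add: field_simps)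
qed

lemma dyint_iff_Tdy: "x \<in> dyint k j \<longleftrightarrow> 0 \<le> Tdy k j x \<and> Tdy k j x < 1"
  using dyint_descendant_iff[of x k 0 j 0] by simp

lemma scale_measure_eq_density: "scale_measure (ennreal r) M = density M (\<lambda>_. ennreal r)"
  by (rule measure_eqI) (simp_all add: emeasure_density nn_integral_cmult_indicator)

lemma integral_blowup:
  fixes \<psi> :: "real \<Rightarrow> real"
  assumes sets_\<mu>: "sets \<mu> = sets borel" and [measurable]: "\<psi> \<in> borel_measurable borel"
  shows "(\<integral>x. \<psi> x \<partial>blowup \<mu> k j) =
    (\<integral>x. indicator (dyint k j) x * \<psi> (Tdy k j x) \<partial>\<mu>) / measure \<mu> (dyint k j)"
proof -
  let ?I = "dyint k j"
  let ?N = "density \<mu> (indicator ?I)"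
  have [measurable_cong]: "sets ?N = sets borel" using sets_\<mu> by simp
  have distr: "(\<integral>x. \<psi> x \<partial>distr ?N borel (Tdy k j)) = (\<integral>x. \<psi> (Tdy k j x) \<partial>?N)"
    by (rule integral_distr) measurable
  have "(\<integral>x. \<psi> x \<partial>blowup \<mu> k j) = (\<integral>x. 1 / measure \<mu> ?I * \<psi> x \<partial>distr ?N borel (Tdy k j))"
    unfolding blowup_def scale_measure_eq_density by (rule integral_real_density) auto
  also have "\<dots> = 1 / measure \<mu> ?I * (\<integral>x. \<psi> (Tdy k j x) \<partial>?N)"
    by (simp add: distr)
  also have "(\<integral>x. \<psi> (Tdy k j x) \<partial>?N) = (\<integral>x. indicator ?I x * \<psi> (Tdy k j x) \<partial>\<mu>)"
  proof -
    have "(indicator ?I :: real \<Rightarrow> ennreal) = (\<lambda>x. ennreal (indicator ?I x))"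
      by (auto simp: indicator_def)
    moreover have "(\<lambda>x. \<psi> (Tdy k j x)) \<in> borel_measurable \<mu>"
      unfolding measurable_cong_sets[OF sets_\<mu> refl] by measurable
    ultimately show ?thesis using sets_\<mu> by (simp add: integral_real_density)
  qed
  finally show ?thesis by simp
qed

lemma integrable_bounded_borel:
  fixes f :: "real \<Rightarrow> real"
  assumes "finite_measure M" "sets M = sets borel" "f \<in> borel_measurable borel" "\<And>x. \<bar>f x\<bar> \<le> B"
  shows "integrable M f"
proof -
  interpret finite_measure M by fact
  have "f \<in> borel_measurable M"
    using assms(3) unfolding measurable_cong_sets[OF assms(2) refl] .
  then show ?thesis using assms(4) by (intro integrable_const_bound[where B = B]) auto
qed

definition W1_test_functions :: "(real \<Rightarrow> real) set" where
  "W1_test_functions = {\<psi>. 1-lipschitz_on UNIV \<psi> \<and> (\<forall>x. x \<notin> {0..1} \<longrightarrow> \<psi> x = 0)}"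

lemma W1_test_function_measurable: "\<psi> \<in> W1_test_functions \<Longrightarrow> \<psi> \<in> borel_measurable borel"
  unfolding W1_test_functions_def
  by (auto intro!: borel_measurable_continuous_onI lipschitz_on_continuous_on)

lemma W1_test_function_bounded:
  assumes "\<psi> \<in> W1_test_functions"
  shows "\<bar>\<psi> x\<bar> \<le> 2"
proof (cases "x \<in> {0..1}")
  case True
  have "1-lipschitz_on UNIV \<psi>" "\<psi> 2 = 0" using assms unfolding W1_test_functions_def by auto
  then have "\<bar>\<psi> x\<bar> \<le> \<bar>x - 2\<bar>" using lipschitz_onD[of 1 UNIV \<psi> x 2] by (simp add: dist_real_def)
  then show ?thesis using True by auto
next
  case False
  then show ?thesis using assms unfolding W1_test_functions_def by auto
qed

lemma
  assumes "prob_on_unit \<mu>" "\<psi> \<in> W1_test_functions" "A \<in> sets borel" "\<bar>c\<bar> \<le> 2"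
  shows integral_blowup_le:
      "(\<And>x. indicator (dyint k j) x * \<psi> (Tdy k j x) \<le> c * indicator A x) \<Longrightarrow>
         (\<integral>x. \<psi> x \<partial>blowup \<mu> k j) \<le> c * measure \<mu> A / measure \<mu> (dyint k j)"
    and integral_blowup_ge:
      "(\<And>x. c * indicator A x \<le> indicator (dyint k j) x * \<psi> (Tdy k j x)) \<Longrightarrow>
         c * measure \<mu> A / measure \<mu> (dyint k j) \<le> (\<integral>x. \<psi> x \<partial>blowup \<mu> k j)"
proof -
  have sets_\<mu>: "sets \<mu> = sets borel" and "finite_measure \<mu>"
    using assms(1) unfolding prob_on_unit_def prob_space_def by auto
  have [measurable]: "\<psi> \<in> borel_measurable borel" "A \<in> sets borel"
    using W1_test_function_measurable assms(2,3) by auto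
  note integrable = integrable_bounded_borel[OF \<open>finite_measure \<mu>\<close> sets_\<mu>]
  have int_f: "integrable \<mu> (\<lambda>x. indicator (dyint k j) x * \<psi> (Tdy k j x))"
    by (rule integrable[where B = 2]) (auto simp: indicator_def W1_test_function_bounded[OF assms(2)])
  have int_g: "integrable \<mu> (\<lambda>x. c * indicator A x)"
    by (rule integrable[where B = 2]) (auto simp: indicator_def assms(4))
  have space_\<mu>: "space \<mu> = UNIV" using sets_eq_imp_space_eq[OF sets_\<mu>] by simp
  show "(\<integral>x. \<psi> x \<partial>blowup \<mu> k j) \<le> c * measure \<mu> A / measure \<mu> (dyint k j)"
    if "\<And>x. indicator (dyint k j) x * \<psi> (Tdy k j x) \<le> c * indicator A x"
    unfolding integral_blowup[OF sets_\<mu> W1_test_function_measurable[OF assms(2)]]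
    using integral_mono[OF int_f int_g that] by (simp add: space_\<mu> divide_right_mono)
  show "c * measure \<mu> A / measure \<mu> (dyint k j) \<le> (\<integral>x. \<psi> x \<partial>blowup \<mu> k j)"
    if "\<And>x. c * indicator A x \<le> indicator (dyint k j) x * \<psi> (Tdy k j x)"
    unfolding integral_blowup[OF sets_\<mu> W1_test_function_measurable[OF assms(2)]]
    using integral_mono[OF int_g int_f that] by (simp add: space_\<mu> divide_right_mono)
qed

lemma integral_blowup_bounded:
  assumes "prob_on_unit \<mu>" "\<psi> \<in> W1_test_functions"
  shows "\<bar>\<integral>x. \<psi> x \<partial>blowup \<mu> k j\<bar> \<le> 2"
proof -
  let ?m = "measure \<mu> (dyint k j)"
  have bound: "-2 \<le> \<psi> y \<and> \<psi> y \<le> 2" for y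
    using W1_test_function_bounded[OF assms(2), of y] by linarith
  have "(\<integral>x. \<psi> x \<partial>blowup \<mu> k j) \<le> 2 * ?m / ?m"
    by (rule integral_blowup_le[OF assms]) (use bound in \<open>auto simp: indicator_def\<close>)
  moreover have "-2 * ?m / ?m \<le> (\<integral>x. \<psi> x \<partial>blowup \<mu> k j)"
    by (rule integral_blowup_ge[OF assms]) (use bound in \<open>auto simp: indicator_def\<close>)
  ultimately show ?thesis by (cases "?m = 0") auto
qed

lemma integral_blowup_diff_le_alpha:
  assumes "prob_on_unit \<mu>" "prob_on_unit \<nu>" "\<psi> \<in> W1_test_functions"
  shows "\<bar>(\<integral>x. \<psi> x \<partial>blowup \<mu> k j) - (\<integral>x. \<psi> x \<partial>blowup \<nu> k j)\<bar> \<le> alpha \<mu> \<nu> k j"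
proof -
  define F where "F (\<phi> :: real \<Rightarrow> real) = \<bar>(\<integral>x. \<phi> x \<partial>blowup \<mu> k j) - (\<integral>x. \<phi> x \<partial>blowup \<nu> k j)\<bar>" for \<phi>
  have "bdd_above (F ` W1_test_functions)"
  proof (rule bdd_aboveI2)
    fix \<phi> assume "\<phi> \<in> W1_test_functions"
    then show "F \<phi> \<le> 4"
      using integral_blowup_bounded[OF assms(1), of \<phi> k j] integral_blowup_bounded[OF assms(2), of \<phi> k j]
      unfolding F_def by linarith
  qed
  moreover have "alpha \<mu> \<nu> k j = (SUP \<phi> \<in> W1_test_functions. F \<phi>)"
    unfolding alpha_def W1_def F_def W1_test_functions_def ..
  ultimately show ?thesis using cSUP_upper[OF assms(3)] unfolding F_def by simp
qed

definition tent :: "real \<Rightarrow> real \<Rightarrow> real" where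
  "tent c x = max 0 (1/4 - \<bar>x - c\<bar>)"

lemma tent_W1_test_function:
  assumes "1/4 \<le> c" "c \<le> 3/4"
  shows "tent c \<in> W1_test_functions"
  unfolding W1_test_functions_def
proof (intro CollectI conjI allI impI)
  show "1-lipschitz_on UNIV (tent c)"
    by (rule lipschitz_onI) (auto simp: tent_def dist_real_def max_def abs_if)
  show "tent c x = 0" if "x \<notin> {0..1}" for x
    using that assms by (auto simp: tent_def max_def abs_if)
qed

lemma tent_left_half:
  "indicator (dyint k j) x * tent (1/4) (Tdy k j x) \<le> 1/4 * indicator (dyint (Suc k) (2 * j)) x"
  "1/8 * indicator (dyint (k + 3) (8 * j + 1)) x \<le> indicator (dyint k j) x * tent (1/4) (Tdy k j x)"
  using dyint_iff_Tdy[of x k j] dyint_descendant_iff[of x k 1 j 0] dyint_descendant_iff[of x k 3 j 1]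
  by (auto simp: indicator_def tent_def max_def abs_if)

lemma tent_right_half:
  "indicator (dyint k j) x * tent (3/4) (Tdy k j x) \<le> 1/4 * indicator (dyint (Suc k) (2 * j + 1)) x"
  "1/8 * indicator (dyint (k + 3) (8 * j + 6)) x \<le> indicator (dyint k j) x * tent (3/4) (Tdy k j x)"
  using dyint_iff_Tdy[of x k j] dyint_descendant_iff[of x k 1 j 1] dyint_descendant_iff[of x k 3 j 6]
  by (auto simp: indicator_def tent_def max_def abs_if)

lemma dyadic_doubling_mono:
  assumes "dyadic_doubling \<nu> D" "D \<le> D'"
  shows "dyadic_doubling \<nu> D'"
  unfolding dyadic_doubling_def
proof (intro allI impI)
  fix k j :: nat assume "j < 2 ^ Suc k"
  then have "measure \<nu> (dyint k (j div 2)) \<le> D * measure \<nu> (dyint (Suc k) j)"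
    using assms(1) unfolding dyadic_doubling_def by blast
  also have "\<dots> \<le> D' * measure \<nu> (dyint (Suc k) j)"
    using assms(2) by (intro mult_right_mono) auto
  finally show "measure \<nu> (dyint k (j div 2)) \<le> D' * measure \<nu> (dyint (Suc k) j)" .
qed

lemma dyadic_doubling_descendant:
  assumes doubling: "dyadic_doubling \<nu> D" and "0 \<le> D" and "i < 2 ^ (k + n)"
  shows "measure \<nu> (dyint k (i div 2 ^ n)) \<le> D ^ n * measure \<nu> (dyint (k + n) i)"
  using \<open>i < 2 ^ (k + n)\<close>
proof (induction n arbitrary: i)
  case 0
  then show ?case by simp
next
  case (Suc n)
  have "i div 2 < 2 ^ (k + n)" using Suc.prems by simp
  then have "measure \<nu> (dyint k (i div 2 div 2 ^ n)) \<le> D ^ n * measure \<nu> (dyint (k + n) (i div 2))"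
    by (rule Suc.IH)
  also have "\<dots> \<le> D ^ n * (D * measure \<nu> (dyint (k + Suc n) i))"
    using doubling Suc.prems \<open>0 \<le> D\<close> unfolding dyadic_doubling_def
    by (intro mult_left_mono) auto
  finally show ?case by (simp add: div_mult2_eq ac_simps)
qed

lemma dyadic_doubling_measure_pos:
  assumes "prob_on_unit \<nu>" "dyadic_doubling \<nu> D" "0 \<le> D" "j < 2 ^ k"
  shows "0 < measure \<nu> (dyint k j)"
proof -
  have "measure \<nu> (dyint 0 0) = 1"
    using assms(1) unfolding prob_on_unit_def dyint_def by simp
  moreover have "measure \<nu> (dyint 0 (j div 2 ^ k)) \<le> D ^ k * measure \<nu> (dyint k j)"
    using dyadic_doubling_descendant[OF assms(2,3), of j 0 k] assms(4) by simp
  moreover have "j div 2 ^ k = 0" using assms(4) by simp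
  ultimately have "1 \<le> D ^ k * measure \<nu> (dyint k j)" by simp
  then show ?thesis by (metis measure_nonneg mult_zero_right not_one_le_zero order_le_less)
qed

lemma measure_le_of_alpha_small:
  assumes prob: "prob_on_unit \<mu>" "prob_on_unit \<nu>" and test: "\<psi> \<in> W1_test_functions"
    and [measurable]: "H \<in> sets borel" "J \<in> sets borel"
    and upper: "\<And>x. indicator (dyint k j) x * \<psi> (Tdy k j x) \<le> 1/4 * indicator H x"
    and lower: "\<And>x. 1/8 * indicator J x \<le> indicator (dyint k j) x * \<psi> (Tdy k j x)"
    and "0 < E" and doubling: "measure \<nu> (dyint k j) \<le> E * measure \<nu> J"
    and \<nu>_pos: "0 < measure \<nu> (dyint k j)" and small: "alpha \<mu> \<nu> k j < 1 / (16 * E)"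
  shows "measure \<mu> (dyint k j) \<le> 4 * E * measure \<mu> H"
proof (cases "measure \<mu> (dyint k j) = 0")
  case False
  then have \<mu>_pos: "0 < measure \<mu> (dyint k j)" using measure_nonneg[of \<mu>] by (simp add: order_less_le)
  have "1 / (8 * E) \<le> 1/8 * measure \<nu> J / measure \<nu> (dyint k j)"
    using doubling \<nu>_pos \<open>0 < E\<close> by (simp add: field_simps)
  also have "\<dots> \<le> (\<integral>x. \<psi> x \<partial>blowup \<nu> k j)"
    by (rule integral_blowup_ge[OF prob(2) test]) (use lower in auto)
  also have "\<dots> < (\<integral>x. \<psi> x \<partial>blowup \<mu> k j) + 1 / (16 * E)"
    using integral_blowup_diff_le_alpha[OF prob test, of k j] small by linarith
  also have "(\<integral>x. \<psi> x \<partial>blowup \<mu> k j) \<le> 1/4 * measure \<mu> H / measure \<mu> (dyint k j)"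
    by (rule integral_blowup_le[OF prob(1) test]) (use upper in auto)
  finally have "1 / (16 * E) < measure \<mu> H / (4 * measure \<mu> (dyint k j))"
    by (simp add: field_simps)
  then show ?thesis using \<mu>_pos \<open>0 < E\<close> by (simp add: field_simps)
qed (use \<open>0 < E\<close> in simp)

theorem mainTheorem8:
  fixes D :: real
  shows "\<exists>\<epsilon> C. \<epsilon> > 0 \<and> C \<ge> 1 \<and>
    (\<forall>\<mu> \<nu>. prob_on_unit \<mu> \<and> prob_on_unit \<nu> \<and> dyadic_doubling \<nu> D \<longrightarrow>
       (\<forall>k j. j < 2 ^ k \<and> alpha \<mu> \<nu> k j < \<epsilon> \<longrightarrow>
          measure \<mu> (dyint k j) \<le>
            C * min (measure \<mu> (dyint (Suc k) (2 * j))) (measure \<mu> (dyint (Suc k) (2 * j + 1)))))"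
proof (intro exI conjI allI impI)
  define E where "E = max D 1 ^ 3"
  have "1 \<le> E" unfolding E_def by simp
  then show "0 < 1 / (16 * E)" "1 \<le> 4 * E" by simp_all
  fix \<mu> \<nu> k j
  assume "prob_on_unit \<mu> \<and> prob_on_unit \<nu> \<and> dyadic_doubling \<nu> D"
    and "j < 2 ^ k \<and> alpha \<mu> \<nu> k j < 1 / (16 * E)"
  then have prob: "prob_on_unit \<mu>" "prob_on_unit \<nu>"
    and doubling: "dyadic_doubling \<nu> (max D 1)" and j: "j < 2 ^ k"
    and small: "alpha \<mu> \<nu> k j < 1 / (16 * E)"
    using dyadic_doubling_mono[of \<nu> D "max D 1"] by auto
  have grandchild: "measure \<nu> (dyint k j) \<le> E * measure \<nu> (dyint (k + 3) i)" if "i div 8 = j" for i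
  proof -
    have "i < 2 ^ (k + 3)" using that j by (simp add: power_add div_less_iff_less_mult)
    then show ?thesis
      using dyadic_doubling_descendant[OF doubling _, of i k 3] that unfolding E_def by auto
  qed
  note half = measure_le_of_alpha_small[OF prob _ sets_dyint sets_dyint _ _ _ grandchild
      dyadic_doubling_measure_pos[OF prob(2) doubling _ j] small]
  have "measure \<mu> (dyint k j) \<le> 4 * E * measure \<mu> (dyint (Suc k) (2 * j))"
    by (rule half[OF tent_W1_test_function tent_left_half]) (use \<open>1 \<le> E\<close> in auto)
  moreover have "measure \<mu> (dyint k j) \<le> 4 * E * measure \<mu> (dyint (Suc k) (2 * j + 1))"
    by (rule half[OF tent_W1_test_function tent_right_half]) (use \<open>1 \<le> E\<close> in auto)
  ultimately show "measure \<mu> (dyint k j) \<le>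
      4 * E * min (measure \<mu> (dyint (Suc k) (2 * j))) (measure \<mu> (dyint (Suc k) (2 * j + 1)))"
    by (simp add: min_def)
qed

end
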